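(* Let $k\ge3$ be odd and let $G$ be a $k$-uniform hypergraph. Then the number of minimal canonical H-eigenvectors of the Laplacian tensor $\mathcal D-\mathcal A$ corresponding to the eigenvalue $0$, counted with $\mathbf x$ and $-\mathbf x$ identified, equals the number of connected components of $G$ (singletons included).
   Context: A $k$-uniform hypergraph $G=(V,E)$ has vertex set $V=[n]$ ($n\ge k$) and nonempty edge set $E$ of $k$-element subsets; $E_i=\{e\in E:i\in e\}$, $d_i=|E_i|$. Connected components are maximal sets of vertices pairwise joined by chains of edges with consecutive edges intersecting; an isolated vertex (singleton) is also a connected component. $\mathcal A$: $a_{i_1\dots i_k}=\frac1{(k-1)!}$ if $\{i_1,\dots,i_k\}\in E$, else $0$; $\mathcal D$ diagonal with $d_{i\dots i}=d_i$; so $((\mathcal D-\mathcal A)\mathbf x^{k-1})_i=d_ix_i^{k-1}-\sum_{e\in E_i}\prod_{j\in e\setminus\{i\}}x_j$. A nonzero $\mathbf x\in\mathbb C^n$ is an eigenvector of $\mathcal T$ for $\lambda$ if $(\mathcal T\mathbf x^{k-1})_i=\lambda x_i^{k-1}$ for all $i$; an H-eigenvector is a real eigenvector; canonical means $\max_i|x_i|=1$; an eigenvector of eigenvalue $0$ is minimal if no eigenvector of eigenvalue $0$ has support strictly contained in its support. *)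

theory Defs
  imports Complex_Main
begin

definition uniform_hypergraph :: "nat \<Rightarrow> nat \<Rightarrow> nat set set \<Rightarrow> bool" where
  "uniform_hypergraph k n E \<longleftrightarrow> k \<le> n \<and> E \<noteq> {} \<and>
     (\<forall>e\<in>E. e \<subseteq> {1..n} \<and> card e = k)"

definition edges_at :: "nat set set \<Rightarrow> nat \<Rightarrow> nat set set" where
  "edges_at E i = {e \<in> E. i \<in> e}"

definition degree :: "nat set set \<Rightarrow> nat \<Rightarrow> nat" where
  "degree E i = card (edges_at E i)"

definition cvec :: "nat \<Rightarrow> (nat \<Rightarrow> complex) \<Rightarrow> bool" where
  "cvec n x \<longleftrightarrow> (\<forall>i. i \<notin> {1..n} \<longrightarrow> x i = 0)"

text \<open>((D - A) x^(k-1))_i\<close>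
definition lap_apply :: "nat \<Rightarrow> nat set set \<Rightarrow> (nat \<Rightarrow> complex) \<Rightarrow> nat \<Rightarrow> complex" where
  "lap_apply k E x i = of_nat (degree E i) * x i ^ (k - 1)
      - (\<Sum>e\<in>edges_at E i. \<Prod>j\<in>e - {i}. x j)"

definition lap_eigenvector ::
  "nat \<Rightarrow> nat \<Rightarrow> nat set set \<Rightarrow> complex \<Rightarrow> (nat \<Rightarrow> complex) \<Rightarrow> bool" where
  "lap_eigenvector k n E lam x \<longleftrightarrow> cvec n x \<and> x \<noteq> (\<lambda>_. 0) \<and>
     (\<forall>i\<in>{1..n}. lap_apply k E x i = lam * x i ^ (k - 1))"

definition H_vector :: "(nat \<Rightarrow> complex) \<Rightarrow> bool" where
  "H_vector x \<longleftrightarrow> (\<forall>i. x i \<in> \<real>)"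

definition canonical :: "nat \<Rightarrow> (nat \<Rightarrow> complex) \<Rightarrow> bool" where
  "canonical n x \<longleftrightarrow> Max ((\<lambda>i. cmod (x i)) ` {1..n}) = 1"

definition support :: "nat \<Rightarrow> (nat \<Rightarrow> complex) \<Rightarrow> nat set" where
  "support n x = {i \<in> {1..n}. x i \<noteq> 0}"

definition minimal_zero_eigenvector ::
  "nat \<Rightarrow> nat \<Rightarrow> nat set set \<Rightarrow> (nat \<Rightarrow> complex) \<Rightarrow> bool" where
  "minimal_zero_eigenvector k n E x \<longleftrightarrow> lap_eigenvector k n E 0 x \<and>
     \<not> (\<exists>y. lap_eigenvector k n E 0 y \<and> support n y \<subset> support n x)"

definition min_canon_H_zero :: "nat \<Rightarrow> nat \<Rightarrow> nat set set \<Rightarrow> (nat \<Rightarrow> complex) set" where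
  "min_canon_H_zero k n E =
     {x. minimal_zero_eigenvector k n E x \<and> H_vector x \<and> canonical n x}"

text \<open>Connected components: i, j joined by a chain of edges with consecutive edges
  intersecting, i.e. in the transitive closure of "lie in a common edge";
  plus reflexivity so isolated vertices form singleton components.\<close>
definition joined :: "nat \<Rightarrow> nat set set \<Rightarrow> (nat \<times> nat) set" where
  "joined n E = Id_on {1..n} \<union> {(i, j). \<exists>e\<in>E. i \<in> e \<and> j \<in> e}\<^sup>+"

definition components :: "nat \<Rightarrow> nat set set \<Rightarrow> nat set set" where
  "components n E = {1..n} // joined n E"

end

theory Submission
  imports Defs "HOL-Library.Indicator_Function"
begin

text \<open>At a vertex i where a zero eigenvector x attains its maximal modulus M, the equation
  d_i x_i^(k-1) = \<Sum>_(e\<ni>i) \<Prod>_(j\<in>e-{i}) x_j and the triangle inequality leave no slack: every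
  product has modulus M^(k-1), so |x_j| = M on every edge through i. Hence the vertices of maximal
  modulus form a union of components, a zero eigenvector supported in a component fills it, and the
  indicator vectors of components are minimal. For a real x and even k - 1 the same equality
  forces each product itself to be M^(k-1), so x_i = (\<Prod>_(j\<in>e) x_j) / M^(k-1) is the same for all
  vertices i of an edge: a minimal canonical real zero eigenvector is constant on a component,
  of value \<plusminus>1, and vanishes elsewhere. Thus {x, -x} \<mapsto> component is a bijection.\<close>

lemma sum_le_const_eq:
  fixes f :: "'a \<Rightarrow> real"
  assumes "finite S" and le: "\<And>t. t \<in> S \<Longrightarrow> f t \<le> c" and "real (card S) * c \<le> sum f S"
    and "s \<in> S"
  shows "f s = c"
proof -
  have nonneg: "\<And>t. t \<in> S \<Longrightarrow> 0 \<le> c - f t" using le by simp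
  have "(\<Sum>t\<in>S. c - f t) = real (card S) * c - sum f S" by (simp add: sum_subtractf)
  then have "(\<Sum>t\<in>S. c - f t) \<le> 0" using assms(3) by linarith
  moreover have "0 \<le> (\<Sum>t\<in>S. c - f t)" by (rule sum_nonneg) (rule nonneg)
  ultimately have "(\<Sum>t\<in>S. c - f t) = 0" by linarith
  then have "\<forall>t\<in>S. c - f t = 0"
    using sum_nonneg_eq_0_iff[of S "\<lambda>t. c - f t"] assms(1) nonneg by blast
  then show ?thesis using \<open>s \<in> S\<close> by simp
qed

lemma prod_le_const_eq:
  fixes g :: "'a \<Rightarrow> real"
  assumes "finite A" and nonneg: "\<And>a. a \<in> A \<Longrightarrow> 0 \<le> g a"
    and le: "\<And>a. a \<in> A \<Longrightarrow> g a \<le> m"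
    and "m ^ card A \<le> prod g A" and "a \<in> A"
  shows "g a = m"
proof (rule ccontr)
  assume "g a \<noteq> m"
  with le \<open>a \<in> A\<close> have lt: "g a < m" by fastforce
  have "0 \<le> g a" using nonneg \<open>a \<in> A\<close> by blast
  have "prod g (A - {a}) \<le> m ^ card (A - {a})"
    using prod_mono[of "A - {a}" g "\<lambda>_. m"] nonneg le by (simp add: prod_constant)
  then have "g a * prod g (A - {a}) \<le> g a * m ^ card (A - {a})"
    using \<open>0 \<le> g a\<close> by (rule mult_left_mono)
  also have "\<dots> < m * m ^ card (A - {a})"
    using lt \<open>0 \<le> g a\<close> by (intro mult_strict_right_mono) simp_all
  also have "\<dots> = m ^ card A"
    using card_Suc_Diff1[OF assms(1,5)] by (metis power_Suc)
  finally show False using assms(4) prod.remove[OF assms(1,5), of g] by linarith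
qed

lemma inj_on_indicator_pair:
  "inj_on (\<lambda>C. {indicator C :: 'a \<Rightarrow> 'b::ring_char_0, - indicator C}) {C. C \<noteq> {}}"
proof (rule inj_onI)
  fix C D :: "'a set"
  assume "C \<in> {C. C \<noteq> {}}"
    and eq: "{indicator C :: 'a \<Rightarrow> 'b, - indicator C} = {indicator D, - indicator D}"
  then obtain c where "c \<in> C" by blast
  have "indicator C \<noteq> (- indicator D :: 'a \<Rightarrow> 'b)"
    using \<open>c \<in> C\<close> by (auto simp: fun_eq_iff split: split_indicator dest!: spec[of _ c])
  with eq have "indicator C = (indicator D :: 'a \<Rightarrow> 'b)" by (auto simp: doubleton_eq_iff)
  then show "C = D" by (metis indicator_eq_1_iff set_eqI)
qed

lemma uniform_hypergraph_edge:
  assumes "uniform_hypergraph k n E" and "e \<in> E"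
  shows "e \<subseteq> {1..n}" and "card e = k" and "finite e"
  using assms finite_subset[of e "{1..n}"] unfolding uniform_hypergraph_def by auto

lemma finite_edges_at:
  assumes "uniform_hypergraph k n E"
  shows "finite (edges_at E i)"
proof (rule finite_subset)
  show "edges_at E i \<subseteq> Pow {1..n}"
    using uniform_hypergraph_edge(1)[OF assms] unfolding edges_at_def by blast
qed simp

lemma card_edge_minus_vertex:
  assumes "uniform_hypergraph k n E" and "e \<in> edges_at E i"
  shows "card (e - {i}) = k - 1"
  using assms uniform_hypergraph_edge[OF assms(1)] unfolding edges_at_def by auto

definition adjacent :: "nat set set \<Rightarrow> (nat \<times> nat) set" where
  "adjacent E = {(i, j). \<exists>e\<in>E. i \<in> e \<and> j \<in> e}"

lemma joined_eq: "joined n E = Id_on {1..n} \<union> (adjacent E)\<^sup>+"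
  unfolding joined_def adjacent_def by simp

lemma adjacent_subset:
  "uniform_hypergraph k n E \<Longrightarrow> adjacent E \<subseteq> {1..n} \<times> {1..n}"
  using uniform_hypergraph_edge(1) unfolding adjacent_def by blast

lemma adjacent_joined: "(a, b) \<in> adjacent E \<Longrightarrow> (a, b) \<in> joined n E"
  unfolding joined_eq by blast

lemma equiv_joined:
  assumes "uniform_hypergraph k n E"
  shows "equiv {1..n} (joined n E)"
proof (rule equivI)
  have "(adjacent E)\<^sup>+ \<subseteq> {1..n} \<times> {1..n}"
    by (rule trancl_subset_Sigma[OF adjacent_subset[OF assms]])
  then show "joined n E \<subseteq> {1..n} \<times> {1..n}" and "refl_on {1..n} (joined n E)"
    unfolding joined_eq refl_on_def by auto
  have "sym (adjacent E)" unfolding adjacent_def sym_def by blast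
  then show "sym (joined n E)" unfolding joined_eq by (intro sym_Un sym_Id_on sym_trancl)
  show "trans (joined n E)"
  proof (rule transI)
    fix a b c
    assume "(a, b) \<in> joined n E" and "(b, c) \<in> joined n E"
    then show "(a, c) \<in> joined n E"
      unfolding joined_eq by (metis Id_on_iff UnCI UnE trancl_trans)
  qed
qed

lemma joined_induct:
  assumes "(a, b) \<in> joined n E" and "P a"
    and step: "\<And>u v. P u \<Longrightarrow> (u, v) \<in> adjacent E \<Longrightarrow> P v"
  shows "P b"
proof -
  have "(a, b) \<in> (adjacent E)\<^sup>*"
    using assms(1) unfolding joined_eq by (auto simp: Id_on_iff)
  then show ?thesis by (induction rule: rtrancl_induct) (use assms(2) step in blast)+
qed

lemma component_edge_iff:
  assumes "uniform_hypergraph k n E" and "C \<in> components n E"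
    and "e \<in> E" and "i \<in> e" and "j \<in> e"
  shows "i \<in> C \<longleftrightarrow> j \<in> C"
proof -
  have "(i, j) \<in> joined n E" and "(j, i) \<in> joined n E"
    using assms(3-5) adjacent_joined unfolding adjacent_def by blast+
  then show ?thesis
    using in_quotient_imp_closed[OF equiv_joined[OF assms(1)] assms(2)[unfolded components_def]]
    by blast
qed

lemma component_subset:
  "uniform_hypergraph k n E \<Longrightarrow> C \<in> components n E \<Longrightarrow> C \<subseteq> {1..n}"
  using in_quotient_imp_subset equiv_joined unfolding components_def by blast

lemma component_nonempty:
  "uniform_hypergraph k n E \<Longrightarrow> C \<in> components n E \<Longrightarrow> C \<noteq> {}"
  using in_quotient_imp_non_empty equiv_joined unfolding components_def by blast

lemma lap_zero_max_modulus_edge: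
  assumes U: "uniform_hypergraph k n E" and zero: "lap_apply k E y i = 0"
    and bound: "\<And>l. cmod (y l) \<le> cmod (y i)" and e: "e \<in> edges_at E i" and "l \<in> e"
  shows "cmod (y l) = cmod (y i)"
proof -
  let ?M = "cmod (y i)"
  have le: "(\<Prod>j\<in>e'-{i}. cmod (y j)) \<le> ?M ^ (k - 1)" if "e' \<in> edges_at E i" for e'
    using prod_mono[of "e' - {i}" "\<lambda>j. cmod (y j)" "\<lambda>_. ?M"] bound
      card_edge_minus_vertex[OF U that] by (simp add: prod_constant)
  have sum_eq: "(\<Sum>e\<in>edges_at E i. \<Prod>j\<in>e-{i}. y j) = of_nat (degree E i) * y i ^ (k - 1)"
    using zero unfolding lap_apply_def by simp
  have "real (degree E i) * ?M ^ (k - 1) = cmod (\<Sum>e\<in>edges_at E i. \<Prod>j\<in>e-{i}. y j)"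
    unfolding sum_eq by (simp add: norm_mult norm_power)
  also have "\<dots> \<le> (\<Sum>e\<in>edges_at E i. \<Prod>j\<in>e-{i}. cmod (y j))"
    by (rule order_trans[OF norm_sum]) (simp add: prod_norm)
  finally have prod_eq: "(\<Prod>j\<in>e-{i}. cmod (y j)) = ?M ^ (k - 1)"
    using sum_le_const_eq[of "edges_at E i" "\<lambda>e. \<Prod>j\<in>e-{i}. cmod (y j)",
        OF finite_edges_at[OF U] le _ e]
    unfolding degree_def by simp
  show ?thesis
  proof (cases "l = i")
    case False
    have "finite (e - {i})"
      using e uniform_hypergraph_edge(3)[OF U] unfolding edges_at_def by blast
    then show ?thesis
      using prod_le_const_eq[of "e - {i}" "\<lambda>j. cmod (y j)" ?M l] prod_eq bound False \<open>l \<in> e\<close>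
        card_edge_minus_vertex[OF U e] by simp
  qed simp
qed

lemma lap_zero_real_edge_product:
  assumes U: "uniform_hypergraph k n E" and "odd k"
    and zero: "lap_apply k E (\<lambda>v. complex_of_real (r v)) i = 0"
    and bound: "\<And>l. \<bar>r l\<bar> \<le> \<bar>r i\<bar>" and e: "e \<in> edges_at E i"
  shows "(\<Prod>j\<in>e-{i}. r j) = \<bar>r i\<bar> ^ (k - 1)"
proof -
  let ?M = "\<bar>r i\<bar>"
  have le: "(\<Prod>j\<in>e'-{i}. r j) \<le> ?M ^ (k - 1)" if "e' \<in> edges_at E i" for e'
  proof -
    have "(\<Prod>j\<in>e'-{i}. r j) \<le> (\<Prod>j\<in>e'-{i}. \<bar>r j\<bar>)" by (metis abs_ge_self abs_prod)
    also have "\<dots> \<le> ?M ^ (k - 1)"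
      using prod_mono[of "e' - {i}" "\<lambda>j. \<bar>r j\<bar>" "\<lambda>_. ?M"] bound
        card_edge_minus_vertex[OF U that] by (simp add: prod_constant)
    finally show ?thesis .
  qed
  have "complex_of_real (real (degree E i) * r i ^ (k - 1))
      = complex_of_real (\<Sum>e\<in>edges_at E i. \<Prod>j\<in>e-{i}. r j)"
    using zero unfolding lap_apply_def by simp
  then have "real (card (edges_at E i)) * ?M ^ (k - 1)
      = (\<Sum>e\<in>edges_at E i. \<Prod>j\<in>e-{i}. r j)"
    using \<open>odd k\<close> unfolding degree_def of_real_eq_iff by (simp add: power_even_abs)
  then show ?thesis
    using sum_le_const_eq[of "edges_at E i" "\<lambda>e. \<Prod>j\<in>e-{i}. r j",
        OF finite_edges_at[OF U] le _ e]
    by simp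
qed

lemma lap_zero_real_adjacent_eq:
  assumes U: "uniform_hypergraph k n E" and "odd k"
    and zero: "\<And>v. v \<in> {1..n} \<Longrightarrow> lap_apply k E (\<lambda>v. complex_of_real (r v)) v = 0"
    and bound: "\<And>l. \<bar>r l\<bar> \<le> \<bar>r a\<bar>" and "r a \<noteq> 0" and ab: "(a, b) \<in> adjacent E"
  shows "r b = r a"
proof -
  obtain e where "e \<in> E" "a \<in> e" "b \<in> e" using ab unfolding adjacent_def by blast
  then have ea: "e \<in> edges_at E a" and eb: "e \<in> edges_at E b" unfolding edges_at_def by blast+
  have a: "a \<in> {1..n}" and b: "b \<in> {1..n}" using ab adjacent_subset[OF U] by blast+
  have "\<bar>r b\<bar> = \<bar>r a\<bar>"
    using lap_zero_max_modulus_edge[OF U zero[OF a] _ ea \<open>b \<in> e\<close>] bound by simp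
  then have "(\<Prod>j\<in>e-{b}. r j) = \<bar>r a\<bar> ^ (k - 1)"
    using lap_zero_real_edge_product[OF U \<open>odd k\<close> zero[OF b] _ eb] bound by simp
  moreover have "(\<Prod>j\<in>e-{a}. r j) = \<bar>r a\<bar> ^ (k - 1)"
    using lap_zero_real_edge_product[OF U \<open>odd k\<close> zero[OF a] bound ea] .
  moreover have "prod r e = r a * (\<Prod>j\<in>e-{a}. r j)" and "prod r e = r b * (\<Prod>j\<in>e-{b}. r j)"
    using prod.remove[OF uniform_hypergraph_edge(3)[OF U \<open>e \<in> E\<close>]] \<open>a \<in> e\<close> \<open>b \<in> e\<close>
    by blast+
  ultimately show ?thesis using \<open>r a \<noteq> 0\<close> by simp
qed

lemma cvec_Max_modulus:
  assumes "cvec n y" and "y \<noteq> (\<lambda>_. 0)"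
  obtains i where "i \<in> {1..n}" and "cmod (y i) = Max ((\<lambda>j. cmod (y j)) ` {1..n})"
    and "\<And>l. cmod (y l) \<le> cmod (y i)" and "y i \<noteq> 0"
proof -
  let ?S = "(\<lambda>j. cmod (y j)) ` {1..n}"
  obtain v where "y v \<noteq> 0" using assms(2) by auto
  then have "v \<in> {1..n}" using assms(1) unfolding cvec_def by blast
  then obtain i where i: "i \<in> {1..n}" "cmod (y i) = Max ?S" using Max_in[of ?S] by fastforce
  have bound: "cmod (y l) \<le> cmod (y i)" for l
  proof (cases "l \<in> {1..n}")
    case False
    then show ?thesis using assms(1) unfolding cvec_def by simp
  qed (simp add: i(2))
  moreover have "y i \<noteq> 0" using bound[of v] \<open>y v \<noteq> 0\<close> by force
  ultimately show thesis using that i by blast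
qed

lemma zero_eigenvector_max_modulus_joined:
  assumes U: "uniform_hypergraph k n E" and eig: "lap_eigenvector k n E 0 y"
    and bound: "\<And>l. cmod (y l) \<le> cmod (y i)" and "(i, j) \<in> joined n E"
  shows "cmod (y j) = cmod (y i)"
proof (rule joined_induct[where P = "\<lambda>v. cmod (y v) = cmod (y i)", OF assms(4) refl])
  fix u v
  assume u: "cmod (y u) = cmod (y i)" and uv: "(u, v) \<in> adjacent E"
  then obtain e where "e \<in> edges_at E u" "v \<in> e" unfolding adjacent_def edges_at_def by blast
  moreover have "lap_apply k E y u = 0"
    using eig uv adjacent_subset[OF U] unfolding lap_eigenvector_def by auto
  ultimately show "cmod (y v) = cmod (y i)" using lap_zero_max_modulus_edge[OF U] bound u by metis
qed

lemma minimal_zero_eigenvector_if_support_component: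
  assumes U: "uniform_hypergraph k n E" and eig: "lap_eigenvector k n E 0 x"
    and C: "support n x \<in> components n E"
  shows "minimal_zero_eigenvector k n E x"
proof -
  have "\<not> support n y \<subset> support n x" if y: "lap_eigenvector k n E 0 y" for y
  proof
    assume sub: "support n y \<subset> support n x"
    obtain i where i: "i \<in> {1..n}" "\<And>l. cmod (y l) \<le> cmod (y i)" "y i \<noteq> 0"
      using y cvec_Max_modulus unfolding lap_eigenvector_def by metis
    then have "i \<in> support n x" using sub unfolding support_def by blast
    have "support n x \<subseteq> support n y"
    proof
      fix j
      assume "j \<in> support n x"
      then have "(i, j) \<in> joined n E"
        using in_quotient_imp_in_rel[OF equiv_joined[OF U] C[unfolded components_def]]
          \<open>i \<in> support n x\<close> by blast
      then have "cmod (y j) = cmod (y i)"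
        by (rule zero_eigenvector_max_modulus_joined[OF U y i(2)])
      then show "j \<in> support n y"
        using i(3) \<open>j \<in> support n x\<close> unfolding support_def by auto
    qed
    then show False using sub by blast
  qed
  then show ?thesis using eig unfolding minimal_zero_eigenvector_def by blast
qed

lemma lap_eigenvector_uminus:
  assumes U: "uniform_hypergraph k n E" and "odd k" and "lap_eigenvector k n E lam x"
  shows "lap_eigenvector k n E lam (- x)"
proof -
  have "(\<Prod>j\<in>e-{i}. - x j) = (\<Prod>j\<in>e-{i}. x j)" if "e \<in> edges_at E i" for e i
    using card_edge_minus_vertex[OF U that] \<open>odd k\<close> by (simp add: prod_uminus)
  then have "lap_apply k E (- x) i = lap_apply k E x i" for i
    using \<open>odd k\<close> unfolding lap_apply_def by (simp add: power_minus_even)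
  moreover have "(- x i) ^ (k - 1) = x i ^ (k - 1)" for i
    using \<open>odd k\<close> by (simp add: power_minus_even)
  ultimately show ?thesis
    using assms(3) unfolding lap_eigenvector_def cvec_def fun_eq_iff by auto
qed

lemma component_indicator_zero_eigenvector:
  assumes U: "uniform_hypergraph k n E" and "k \<ge> 2" and C: "C \<in> components n E"
  shows "lap_eigenvector k n E 0 (indicator C)"
proof -
  have "C \<subseteq> {1..n}" and "C \<noteq> {}"
    using component_subset[OF U C] component_nonempty[OF U C] .
  then have "cvec n (indicator C)" and "indicator C \<noteq> (\<lambda>_. 0 :: complex)"
    unfolding cvec_def by (auto simp: fun_eq_iff indicator_def)
  moreover have "lap_apply k E (indicator C) i = 0" for i
  proof (cases "i \<in> C")
    case True
    have "(\<Prod>j\<in>e-{i}. indicator C j) = (1 :: complex)" if "e \<in> edges_at E i" for e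
    proof (rule prod.neutral)
      have "e \<in> E" and "i \<in> e" using that unfolding edges_at_def by blast+
      then show "\<forall>j\<in>e-{i}. indicator C j = (1 :: complex)"
        using component_edge_iff[OF U C \<open>e \<in> E\<close> \<open>i \<in> e\<close>] True by simp
    qed
    then show ?thesis using True unfolding lap_apply_def degree_def by simp
  next
    case False
    have "(\<Prod>j\<in>e-{i}. indicator C j) = (0 :: complex)" if e: "e \<in> edges_at E i" for e
    proof -
      have "card (e - {i}) \<noteq> 0" using card_edge_minus_vertex[OF U e] \<open>k \<ge> 2\<close> by simp
      then have "e - {i} \<noteq> {}" by (metis card.empty)
      then obtain j where j: "j \<in> e - {i}" by blast
      moreover have "e \<in> E" and "i \<in> e" using e unfolding edges_at_def by blast+
      ultimately have "j \<notin> C"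
        using component_edge_iff[OF U C \<open>e \<in> E\<close> \<open>i \<in> e\<close>] False by blast
      moreover have "finite (e - {i})" using uniform_hypergraph_edge(3)[OF U \<open>e \<in> E\<close>] by simp
      ultimately show ?thesis using j by (intro prod_zero bexI[of _ j]) simp_all
    qed
    then show ?thesis using False \<open>k \<ge> 2\<close> unfolding lap_apply_def by simp
  qed
  ultimately show ?thesis unfolding lap_eigenvector_def by simp
qed

lemma support_indicator:
  assumes "C \<subseteq> {1..n}"
  shows "support n (indicator C) = C" and "support n (- indicator C) = C"
  using assms unfolding support_def by (auto simp: indicator_def)

lemma component_indicator_in_min_canon_H_zero:
  assumes U: "uniform_hypergraph k n E" and "odd k" and "k \<ge> 3" and C: "C \<in> components n E"
  shows "indicator C \<in> min_canon_H_zero k n E" and "- indicator C \<in> min_canon_H_zero k n E"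
proof -
  have "C \<subseteq> {1..n}" and "C \<noteq> {}"
    using component_subset[OF U C] component_nonempty[OF U C] .
  have eig: "lap_eigenvector k n E 0 (indicator C)"
    using component_indicator_zero_eigenvector[OF U _ C] \<open>k \<ge> 3\<close> by simp
  have "minimal_zero_eigenvector k n E (indicator C)"
    and "minimal_zero_eigenvector k n E (- indicator C)"
    using minimal_zero_eigenvector_if_support_component[OF U] eig
      lap_eigenvector_uminus[OF U \<open>odd k\<close> eig] support_indicator[OF \<open>C \<subseteq> {1..n}\<close>] C
    by simp_all
  moreover have "H_vector (indicator C)" and "H_vector (- indicator C)"
    unfolding H_vector_def by (simp_all split: split_indicator)
  moreover have "canonical n (indicator C)" and "canonical n (- indicator C)"
  proof -
    have "Max ((\<lambda>i. cmod (indicator C i :: complex)) ` {1..n}) = 1"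
      using \<open>C \<subseteq> {1..n}\<close> \<open>C \<noteq> {}\<close>
      by (intro Max_eqI) (auto simp: indicator_def of_bool_def split: if_splits)
    then show "canonical n (indicator C)" and "canonical n (- indicator C)"
      unfolding canonical_def by simp_all
  qed
  ultimately show "indicator C \<in> min_canon_H_zero k n E"
    and "- indicator C \<in> min_canon_H_zero k n E"
    unfolding min_canon_H_zero_def by blast+
qed

lemma min_canon_H_zero_component_indicator:
  assumes U: "uniform_hypergraph k n E" and "odd k" and "k \<ge> 3"
    and x: "x \<in> min_canon_H_zero k n E"
  obtains C where "C \<in> components n E" and "x = indicator C \<or> x = - indicator C"
proof -
  have min: "minimal_zero_eigenvector k n E x" and real: "\<And>v. x v \<in> \<real>"
    and can: "canonical n x"
    using x unfolding min_canon_H_zero_def H_vector_def by blast+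
  then have eig: "lap_eigenvector k n E 0 x" unfolding minimal_zero_eigenvector_def by blast
  define r where "r v = Re (x v)" for v
  have x_r: "x = (\<lambda>v. complex_of_real (r v))"
    using real by (simp add: fun_eq_iff r_def complex_is_Real_iff)
  obtain i where i: "i \<in> {1..n}" "cmod (x i) = Max ((\<lambda>j. cmod (x j)) ` {1..n})"
      "\<And>l. cmod (x l) \<le> cmod (x i)"
    using eig cvec_Max_modulus unfolding lap_eigenvector_def by metis
  have "\<bar>r i\<bar> = 1" using i(2) can unfolding canonical_def x_r by simp
  have bound: "\<bar>r l\<bar> \<le> \<bar>r i\<bar>" for l using i(3)[of l] unfolding x_r by simp
  have zero: "lap_apply k E (\<lambda>v. complex_of_real (r v)) v = 0" if "v \<in> {1..n}" for v
    using eig that unfolding lap_eigenvector_def x_r by simp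
  define C where "C = joined n E `` {i}"
  have C: "C \<in> components n E" unfolding components_def C_def using i(1) by (rule quotientI)
  have "C \<subseteq> {1..n}" using component_subset[OF U C] .
  have on_C: "x j = of_real (r i)" if "j \<in> C" for j
  proof -
    have "(i, j) \<in> joined n E" using that unfolding C_def by blast
    then have "r j = r i"
    proof (rule joined_induct[where P = "\<lambda>v. r v = r i"])
      fix u v
      assume "r u = r i" and "(u, v) \<in> adjacent E"
      then show "r v = r i"
        using lap_zero_real_adjacent_eq[OF U \<open>odd k\<close> zero, of u v] bound \<open>\<bar>r i\<bar> = 1\<close> by force
    qed simp
    then show ?thesis unfolding x_r by simp
  qed
  have off_C: "x v = 0" if "v \<notin> C" for v
  proof (rule ccontr)
    assume "x v \<noteq> 0"
    then have "v \<in> support n x"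
      using eig unfolding lap_eigenvector_def cvec_def support_def by blast
    moreover have "C \<subseteq> support n x"
      using on_C \<open>C \<subseteq> {1..n}\<close> \<open>\<bar>r i\<bar> = 1\<close> unfolding support_def by auto
    ultimately have "support n (indicator C) \<subset> support n x"
      using that support_indicator(1)[OF \<open>C \<subseteq> {1..n}\<close>] by blast
    then show False
      using min component_indicator_zero_eigenvector[OF U _ C] \<open>k \<ge> 3\<close>
      unfolding minimal_zero_eigenvector_def by auto
  qed
  have "r i = 1 \<or> r i = -1" using \<open>\<bar>r i\<bar> = 1\<close> by linarith
  then have "x = indicator C \<or> x = - indicator C"
    using on_C off_C by (auto simp: fun_eq_iff split: split_indicator)
  then show thesis using C that by blast
qed

lemma min_canon_H_zero_pairs:
  assumes U: "uniform_hypergraph k n E" and "odd k" and "k \<ge> 3"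
  shows "(\<lambda>x. {x, - x}) ` min_canon_H_zero k n E
    = (\<lambda>C. {indicator C, - indicator C}) ` components n E"
proof (intro equalityI subsetI)
  fix p :: "(nat \<Rightarrow> complex) set"
  assume "p \<in> (\<lambda>x. {x, - x}) ` min_canon_H_zero k n E"
  then obtain x where x: "x \<in> min_canon_H_zero k n E" and p: "p = {x, - x}" by blast
  obtain C where "C \<in> components n E" and "x = indicator C \<or> x = - indicator C"
    using min_canon_H_zero_component_indicator[OF assms x] .
  moreover from this(2) have "p = {indicator C, - indicator C}"
    using p by (auto simp: insert_commute)
  ultimately show "p \<in> (\<lambda>C. {indicator C, - indicator C}) ` components n E" by blast
next
  fix p :: "(nat \<Rightarrow> complex) set"
  assume "p \<in> (\<lambda>C. {indicator C, - indicator C}) ` components n E"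
  then obtain C where "C \<in> components n E" and "p = {indicator C, - indicator C}" by blast
  then show "p \<in> (\<lambda>x. {x, - x}) ` min_canon_H_zero k n E"
    using component_indicator_in_min_canon_H_zero(1)[OF assms] by blast
qed

theorem proposition5p3:
  fixes k n :: nat and E :: "nat set set"
  assumes "odd k" and "k \<ge> 3" and "uniform_hypergraph k n E"
  shows "card ((\<lambda>x. {x, - x}) ` min_canon_H_zero k n E) = card (components n E)"
proof -
  have "components n E \<subseteq> {C. C \<noteq> {}}" using component_nonempty[OF assms(3)] by blast
  then have "inj_on (\<lambda>C. {indicator C :: nat \<Rightarrow> complex, - indicator C}) (components n E)"
    by (rule inj_on_subset[OF inj_on_indicator_pair])
  then show ?thesis by (simp add: min_canon_H_zero_pairs[OF assms(3,1,2)] card_image)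
qed

end
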